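(* Let $K$ be a field equipped with $m$ commuting derivations $\Delta=\{\partial_1,\ldots,\partial_m\}$, all of which are identically zero on $K$, and let $K\{y\}$ be the ring of differential polynomials in one differential indeterminate $y$. For a polynomial $g=\sum_{j}c_jX^{\alpha_j}\in K[X_1,\ldots,X_m]$ (with $c_j\in K$, $\alpha_j\in\mathbb{N}^m$), define $\tilde g=\sum_j c_j\partial^{\alpha_j}y\in K\{y\}$. Let $f,f_1,\ldots,f_r\in K[X_1,\ldots,X_m]$ with $f\in(f_1,\ldots,f_r)$, let $G=\{\tilde f_1,\ldots,\tilde f_r\}$, and let $$k=\min\Big\{\max_{1\leqslant i\leqslant r}\deg g_i \;:\; g_1,\ldots,g_r\in K[X_1,\ldots,X_m],\ f=g_1f_1+\cdots+g_rf_r\Big\}.$$ Then $\tilde f\in (G)^{(k)}$, and, if $k\geqslant 1$, $\tilde f\notin (G)^{(k-1)}$.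
   Context: For $\alpha=(\alpha_1,\ldots,\alpha_m)\in\mathbb{N}^m$, $X^\alpha=X_1^{\alpha_1}\cdots X_m^{\alpha_m}$ and $\partial^\alpha=\partial_1^{\alpha_1}\cdots\partial_m^{\alpha_m}$, whose order is $\alpha_1+\cdots+\alpha_m$. The ring $K\{y\}$ is the polynomial ring over $K$ in the variables $\partial^\alpha y$, $\alpha\in\mathbb{N}^m$, with derivations $\partial_i(\partial^\alpha y)=\partial_i\partial^\alpha y$. For a subset $G\subseteq K\{y\}$ and an integer $j\geqslant 0$, $(G)^{(j)}$ denotes the ideal generated by all $\theta g$ with $g\in G$ and $\theta=\partial^\alpha$ of order at most $j$. $\deg$ denotes total degree. *)

theory Defs
  imports "HOL-Library.Poly_Mapping"
begin

(* Multivariate polynomials over K in variables X_0,...,X_{m-1} (indices shifted by one):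
  maps from exponent vectors (nat \<Rightarrow>\<^sub>0 nat) to coefficients. *)
type_synonym 'a mpoly = "(nat \<Rightarrow>\<^sub>0 nat) \<Rightarrow>\<^sub>0 'a"

(* Differential polynomials K{y}: polynomials in the variables \<partial>^\<alpha> y, indexed by \<alpha>.
  A monomial is a finitely supported map from \<alpha> to exponents. *)
type_synonym 'a dpoly = "((nat \<Rightarrow>\<^sub>0 nat) \<Rightarrow>\<^sub>0 nat) \<Rightarrow>\<^sub>0 'a"

definition ord_mon :: "(nat \<Rightarrow>\<^sub>0 nat) \<Rightarrow> nat" where
  "ord_mon \<alpha> = (\<Sum>i\<in>Poly_Mapping.keys \<alpha>. Poly_Mapping.lookup \<alpha> i)"

definition in_vars :: "nat \<Rightarrow> (nat \<Rightarrow>\<^sub>0 nat) \<Rightarrow> bool" where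
  "in_vars m \<alpha> \<longleftrightarrow> Poly_Mapping.keys \<alpha> \<subseteq> {..<m}"

definition is_poly :: "nat \<Rightarrow> 'a::zero mpoly \<Rightarrow> bool" where
  "is_poly m g \<longleftrightarrow> (\<forall>\<alpha>\<in>Poly_Mapping.keys g. in_vars m \<alpha>)"

(* total degree (degree of the zero polynomial taken to be 0) *)
definition tdeg :: "'a::zero mpoly \<Rightarrow> nat" where
  "tdeg g = Max (insert 0 (ord_mon ` Poly_Mapping.keys g))"

definition dvar :: "(nat \<Rightarrow>\<^sub>0 nat) \<Rightarrow> 'a::comm_ring_1 dpoly" where
  "dvar \<alpha> = Poly_Mapping.single (Poly_Mapping.single \<alpha> 1) 1"

definition tilde :: "'a::comm_ring_1 mpoly \<Rightarrow> 'a dpoly" where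
  "tilde g = (\<Sum>\<alpha>\<in>Poly_Mapping.keys g. Poly_Mapping.single (Poly_Mapping.single \<alpha> 1) (Poly_Mapping.lookup g \<alpha>))"

(* The derivation \<partial>_i on K{y}, zero on K, with \<partial>_i(\<partial>^\<alpha> y) = \<partial>^(\<alpha>+e_i) y,
  extended by the Leibniz rule: on a monomial M = \<Prod> v_\<alpha>^{M \<alpha>},
  \<partial>_i M = \<Sum>_\<alpha> M(\<alpha>) * M / v_\<alpha> * v_{\<alpha>+e_i}. *)
definition dderiv :: "nat \<Rightarrow> 'a::comm_ring_1 dpoly \<Rightarrow> 'a dpoly" where
  "dderiv i P = (\<Sum>M\<in>Poly_Mapping.keys P. \<Sum>\<alpha>\<in>Poly_Mapping.keys M.
      Poly_Mapping.single
        (M - Poly_Mapping.single \<alpha> 1 + Poly_Mapping.single (\<alpha> + Poly_Mapping.single i 1) 1)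
        (of_nat (Poly_Mapping.lookup M \<alpha>) * Poly_Mapping.lookup P M))"

definition dTheta :: "nat \<Rightarrow> (nat \<Rightarrow>\<^sub>0 nat) \<Rightarrow> 'a::comm_ring_1 dpoly \<Rightarrow> 'a dpoly" where
  "dTheta m \<alpha> = foldr (\<lambda>i h. (dderiv i ^^ Poly_Mapping.lookup \<alpha> i) \<circ> h) [0..<m] id"

definition ideal_gen :: "'b::comm_ring_1 set \<Rightarrow> 'b set" where
  "ideal_gen S = {x. \<exists>F c. finite F \<and> F \<subseteq> S \<and> x = (\<Sum>s\<in>F. c s * s)}"

definition ideal_ord :: "nat \<Rightarrow> 'a::comm_ring_1 dpoly set \<Rightarrow> nat \<Rightarrow> 'a dpoly set" where
  "ideal_ord m G j = ideal_gen {dTheta m \<alpha> g | \<alpha> g. g \<in> G \<and> in_vars m \<alpha> \<and> ord_mon \<alpha> \<le> j}"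

end

theory Submission
  imports Defs HOL.Modules
begin

text \<open>Since the derivations vanish on \<open>K\<close>, the additive map \<open>tilde\<close> from \<open>K[X]\<close> onto the
  linear differential polynomials satisfies \<open>\<partial>^\<alpha> (tilde g) = tilde (X^\<alpha> g)\<close>. So a relation
  \<open>f = \<Sum> g_i f_i\<close> with \<open>deg g_i \<le> j\<close> writes \<open>tilde f\<close> as a \<open>K\<close>-combination of the
  generators \<open>\<partial>^\<alpha> (tilde f_i)\<close>, \<open>|\<alpha>| \<le> j\<close>, of \<open>(G)^(j)\<close>. Conversely, in a representation
  \<open>tilde f = \<Sum> c_s \<partial>^\<alpha>_s (tilde f_i_s)\<close> with arbitrary \<open>c_s \<in> K{y}\<close>, the linear part of each
  summand only depends on the constant term \<open>c_s(0)\<close>, and taking linear parts gives the relation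
  \<open>f = \<Sum> c_s(0) X^\<alpha>_s f_i_s\<close> with cofactors of degree \<open>\<le> j\<close>. Hence \<open>tilde f \<in> (G)^(j)\<close>
  exactly when \<open>f\<close> has cofactors of degree at most \<open>j\<close>, and the theorem is the minimality
  of \<open>k\<close>.\<close>

lemma poly_mapping_sum_single:
  "p = (\<Sum>k\<in>Poly_Mapping.keys p. Poly_Mapping.single k (Poly_Mapping.lookup p k))"
proof (rule poly_mapping_eqI)
  fix x
  show "Poly_Mapping.lookup p x =
      Poly_Mapping.lookup (\<Sum>k\<in>Poly_Mapping.keys p. Poly_Mapping.single k (Poly_Mapping.lookup p k)) x"
    by (cases "x \<in> Poly_Mapping.keys p") (auto simp: lookup_sum lookup_single when_def in_keys_iff)
qed

lemma poly_mapping_induct [case_names zero single add]: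
  fixes p :: "'a \<Rightarrow>\<^sub>0 'b::comm_monoid_add"
  assumes "P 0" "\<And>k v. P (Poly_Mapping.single k v)" "\<And>f g. P f \<Longrightarrow> P g \<Longrightarrow> P (f + g)"
  shows "P p"
proof -
  have "P (\<Sum>k\<in>A. Poly_Mapping.single k (Poly_Mapping.lookup p k))" if "finite A" for A
    using that by (induction A rule: finite_induct) (auto intro: assms)
  then show ?thesis by (subst poly_mapping_sum_single) simp
qed

lemma tdeg_le_iff: "tdeg g \<le> d \<longleftrightarrow> (\<forall>\<alpha>\<in>Poly_Mapping.keys g. ord_mon \<alpha> \<le> d)"
  by (simp add: tdeg_def)

lemma module_times: "module ((*) :: 'a::comm_ring_1 \<Rightarrow> 'a \<Rightarrow> 'a)"
  by standard (simp_all add: algebra_simps)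

lemma ideal_gen_eq_span: "ideal_gen S = module.span (*) S"
  unfolding ideal_gen_def module.span_explicit[OF module_times] by blast

subsection \<open>Linear differential polynomials\<close>

lemma tilde_eq_sum_superset:
  assumes "finite S" "Poly_Mapping.keys g \<subseteq> S"
  shows "tilde g = (\<Sum>\<alpha>\<in>S. Poly_Mapping.single (Poly_Mapping.single \<alpha> 1) (Poly_Mapping.lookup g \<alpha>))"
  unfolding tilde_def
  by (rule sum.mono_neutral_left) (use assms in \<open>auto simp: in_keys_iff\<close>)

interpretation tilde: additive "tilde :: 'a::comm_ring_1 mpoly \<Rightarrow> 'a dpoly"
proof
  fix g h :: "'a mpoly"
  let ?S = "Poly_Mapping.keys g \<union> Poly_Mapping.keys h"
  have "tilde (g + h) = (\<Sum>\<alpha>\<in>?S. Poly_Mapping.single (Poly_Mapping.single \<alpha> 1) (Poly_Mapping.lookup (g + h) \<alpha>))"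
    by (rule tilde_eq_sum_superset) (auto dest: keys_add[THEN subsetD])
  also have "\<dots> = tilde g + tilde h"
    by (simp add: tilde_eq_sum_superset[of ?S g] tilde_eq_sum_superset[of ?S h] lookup_add
        single_add sum.distrib)
  finally show "tilde (g + h) = tilde g + tilde h" .
qed

lemma tilde_single:
  "tilde (Poly_Mapping.single \<beta> c) = Poly_Mapping.single (Poly_Mapping.single \<beta> 1) c"
  by (simp add: tilde_def)

lemma tilde_const_mult:
  "tilde (Poly_Mapping.single 0 a * h) = Poly_Mapping.single 0 a * tilde h"
  by (induction h rule: poly_mapping_induct)
    (simp_all add: tilde.add tilde.zero tilde_single mult_single distrib_left)

lemma dderiv_eq_sum_superset:
  assumes "finite S" "Poly_Mapping.keys P \<subseteq> S"
  shows "dderiv i P = (\<Sum>M\<in>S. \<Sum>\<alpha>\<in>Poly_Mapping.keys M.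
      Poly_Mapping.single
        (M - Poly_Mapping.single \<alpha> 1 + Poly_Mapping.single (\<alpha> + Poly_Mapping.single i 1) 1)
        (of_nat (Poly_Mapping.lookup M \<alpha>) * Poly_Mapping.lookup P M))"
  unfolding dderiv_def
  by (rule sum.mono_neutral_left) (use assms in \<open>auto simp: in_keys_iff\<close>)

lemma dderiv_single:
  "dderiv i (Poly_Mapping.single (Poly_Mapping.single \<beta> 1) c) =
   Poly_Mapping.single (Poly_Mapping.single (\<beta> + Poly_Mapping.single i 1) 1) c"
  by (simp add: dderiv_def)

lemma additive_dderiv: "additive (dderiv i)"
proof
  fix P Q :: "'a dpoly"
  let ?S = "Poly_Mapping.keys P \<union> Poly_Mapping.keys Q"
  have "dderiv i (P + Q) = (\<Sum>M\<in>?S. \<Sum>\<alpha>\<in>Poly_Mapping.keys M.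
      Poly_Mapping.single
        (M - Poly_Mapping.single \<alpha> 1 + Poly_Mapping.single (\<alpha> + Poly_Mapping.single i 1) 1)
        (of_nat (Poly_Mapping.lookup M \<alpha>) * Poly_Mapping.lookup (P + Q) M))"
    by (rule dderiv_eq_sum_superset) (auto dest: keys_add[THEN subsetD])
  also have "\<dots> = dderiv i P + dderiv i Q"
    by (simp add: dderiv_eq_sum_superset[of ?S P] dderiv_eq_sum_superset[of ?S Q] lookup_add
        single_add sum.distrib distrib_left)
  finally show "dderiv i (P + Q) = dderiv i P + dderiv i Q" .
qed

lemma dderiv_tilde:
  "dderiv i (tilde h) = tilde (Poly_Mapping.single (Poly_Mapping.single i 1) 1 * h)"
proof (induction h rule: poly_mapping_induct)
  case zero
  show ?case by (simp add: tilde.zero additive.zero[OF additive_dderiv])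
next
  case (single \<beta> c)
  have "dderiv i (tilde (Poly_Mapping.single \<beta> c)) =
      Poly_Mapping.single (Poly_Mapping.single (\<beta> + Poly_Mapping.single i 1) 1) c"
    by (simp only: tilde_single dderiv_single)
  then show ?case by (simp add: tilde_single mult_single add.commute)
next
  case (add g h)
  then show ?case by (simp add: tilde.add additive.add[OF additive_dderiv] distrib_left)
qed

lemma dderiv_funpow_tilde:
  "(dderiv i ^^ n) (tilde h) = tilde (Poly_Mapping.single (Poly_Mapping.single i n) 1 * h)"
proof (induction n)
  case 0
  then show ?case by simp
next
  case (Suc n)
  have "Poly_Mapping.single (Poly_Mapping.single i (Suc n)) 1 =
      Poly_Mapping.single (Poly_Mapping.single i 1) 1 * Poly_Mapping.single (Poly_Mapping.single i n) (1::'a)"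
    by (simp add: mult_single single_add[symmetric])
  with Suc show ?case by (simp add: dderiv_tilde mult.assoc)
qed

lemma sum_list_single_lookup:
  assumes "in_vars m \<alpha>"
  shows "(\<Sum>i\<leftarrow>[0..<m]. Poly_Mapping.single i (Poly_Mapping.lookup \<alpha> i)) = \<alpha>"
proof (rule poly_mapping_eqI)
  fix k
  have "(\<Sum>i\<leftarrow>[0..<m]. Poly_Mapping.single i (Poly_Mapping.lookup \<alpha> i))
      = (\<Sum>i\<in>{0..<m}. Poly_Mapping.single i (Poly_Mapping.lookup \<alpha> i))"
    by (simp add: interv_sum_list_conv_sum_set_nat)
  with assms show "Poly_Mapping.lookup (\<Sum>i\<leftarrow>[0..<m]. Poly_Mapping.single i (Poly_Mapping.lookup \<alpha> i)) k
      = Poly_Mapping.lookup \<alpha> k"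
    unfolding in_vars_def
    by (cases "k < m") (auto simp: lookup_sum lookup_single when_def in_keys_iff)
qed

lemma dTheta_tilde:
  assumes "in_vars m \<alpha>"
  shows "dTheta m \<alpha> (tilde h) = tilde (Poly_Mapping.single \<alpha> 1 * h)"
proof -
  have "foldr (\<lambda>i h. (dderiv i ^^ Poly_Mapping.lookup \<alpha> i) \<circ> h) xs id (tilde h) =
      tilde (Poly_Mapping.single (\<Sum>i\<leftarrow>xs. Poly_Mapping.single i (Poly_Mapping.lookup \<alpha> i)) 1 * h)"
    for xs
    by (induction xs) (simp_all add: dderiv_funpow_tilde mult_single mult.assoc[symmetric] add.commute)
  then show ?thesis
    by (simp add: dTheta_def sum_list_single_lookup[OF assms])
qed

lemma ideal_ord_tilde_image:
  "ideal_ord m (tilde ` H) d =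
    ideal_gen {tilde (Poly_Mapping.single \<alpha> 1 * h) | \<alpha> h. h \<in> H \<and> in_vars m \<alpha> \<and> ord_mon \<alpha> \<le> d}"
proof -
  have "{dTheta m \<alpha> g | \<alpha> g. g \<in> tilde ` H \<and> in_vars m \<alpha> \<and> ord_mon \<alpha> \<le> d} =
      {tilde (Poly_Mapping.single \<alpha> 1 * h) | \<alpha> h. h \<in> H \<and> in_vars m \<alpha> \<and> ord_mon \<alpha> \<le> d}"
    (is "?L = ?R")
  proof (intro equalityI subsetI)
    fix x assume "x \<in> ?L"
    then obtain \<alpha> h where "x = dTheta m \<alpha> (tilde h)" "h \<in> H" "in_vars m \<alpha>" "ord_mon \<alpha> \<le> d"
      by blast
    moreover from this have "x = tilde (Poly_Mapping.single \<alpha> 1 * h)"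
      by (simp add: dTheta_tilde)
    ultimately show "x \<in> ?R" by blast
  next
    fix x assume "x \<in> ?R"
    then obtain \<alpha> h where "x = tilde (Poly_Mapping.single \<alpha> 1 * h)" "h \<in> H" "in_vars m \<alpha>"
        "ord_mon \<alpha> \<le> d"
      by blast
    moreover from this have "x = dTheta m \<alpha> (tilde h)"
      by (simp add: dTheta_tilde)
    ultimately show "x \<in> ?L" by blast
  qed
  then show ?thesis
    by (simp add: ideal_ord_def)
qed

subsection \<open>The linear part of a differential polynomial\<close>

definition linear_part :: "'a::comm_ring_1 dpoly \<Rightarrow> 'a mpoly" where
  "linear_part P = Abs_poly_mapping (\<lambda>\<alpha>. Poly_Mapping.lookup P (Poly_Mapping.single \<alpha> 1))"

lemma inj_single_one: "inj (\<lambda>\<alpha>. Poly_Mapping.single \<alpha> (1::nat))"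
proof (rule injI)
  fix \<alpha> \<beta> :: 'a
  assume "Poly_Mapping.single \<alpha> (1::nat) = Poly_Mapping.single \<beta> 1"
  then have "Poly_Mapping.lookup (Poly_Mapping.single \<alpha> (1::nat)) \<alpha> =
      Poly_Mapping.lookup (Poly_Mapping.single \<beta> 1) \<alpha>"
    by simp
  then show "\<alpha> = \<beta>" by (auto simp: lookup_single when_def split: if_splits)
qed

lemma lookup_linear_part:
  "Poly_Mapping.lookup (linear_part P) \<alpha> = Poly_Mapping.lookup P (Poly_Mapping.single \<alpha> 1)"
proof -
  have "{\<alpha>. Poly_Mapping.lookup P (Poly_Mapping.single \<alpha> 1) \<noteq> 0} =
      (\<lambda>\<alpha>. Poly_Mapping.single \<alpha> 1) -` Poly_Mapping.keys P"
    by (auto simp: in_keys_iff)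
  then have "finite {\<alpha>. Poly_Mapping.lookup P (Poly_Mapping.single \<alpha> 1) \<noteq> 0}"
    using finite_vimageI[OF finite_keys inj_single_one] by simp
  then show ?thesis unfolding linear_part_def by (simp add: Abs_poly_mapping_inverse)
qed

interpretation linear_part: additive "linear_part :: 'a::comm_ring_1 dpoly \<Rightarrow> 'a mpoly"
  by standard (rule poly_mapping_eqI, simp add: lookup_linear_part lookup_add)

lemma linear_part_tilde: "linear_part (tilde h) = h"
proof (rule poly_mapping_eqI)
  fix \<alpha>
  show "Poly_Mapping.lookup (linear_part (tilde h)) \<alpha> = Poly_Mapping.lookup h \<alpha>"
  proof (induction h rule: poly_mapping_induct)
    case zero
    show ?case by (simp add: lookup_linear_part tilde.zero)
  next
    case (single \<beta> c)
    show ?case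
      using inj_single_one[THEN injD, of \<beta> \<alpha>]
      by (auto simp: lookup_linear_part tilde_single lookup_single when_def)
  next
    case (add g h)
    then show ?case by (simp add: lookup_linear_part tilde.add lookup_add)
  qed
qed

lemma add_single_eq_single_iff:
  fixes M :: "'a \<Rightarrow>\<^sub>0 nat"
  shows "M + Poly_Mapping.single \<gamma> 1 = Poly_Mapping.single \<alpha> 1 \<longleftrightarrow> M = 0 \<and> \<gamma> = \<alpha>"
proof
  assume eq: "M + Poly_Mapping.single \<gamma> 1 = Poly_Mapping.single \<alpha> 1"
  then have "Poly_Mapping.lookup (M + Poly_Mapping.single \<gamma> 1) \<gamma> =
      Poly_Mapping.lookup (Poly_Mapping.single \<alpha> 1) \<gamma>"
    by simp
  then have "\<gamma> = \<alpha>"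
    by (auto simp: lookup_add lookup_single when_def split: if_splits)
  with eq show "M = 0 \<and> \<gamma> = \<alpha>"
    using add_right_imp_eq[of M "Poly_Mapping.single \<gamma> 1" 0] by simp
qed simp

lemma linear_part_mult_tilde:
  "linear_part (c * tilde h) = Poly_Mapping.single 0 (Poly_Mapping.lookup c 0) * h"
proof (induction c rule: poly_mapping_induct)
  case zero
  show ?case by (simp add: linear_part.zero)
next
  case (single M a)
  show ?case
  proof (induction h rule: poly_mapping_induct)
    case zero
    show ?case by (simp add: linear_part.zero tilde.zero)
  next
    case (single \<gamma> b)
    show ?case
    proof (rule poly_mapping_eqI)
      fix \<alpha>
      show "Poly_Mapping.lookup (linear_part (Poly_Mapping.single M a * tilde (Poly_Mapping.single \<gamma> b))) \<alpha> =
        Poly_Mapping.lookup (Poly_Mapping.single 0 (Poly_Mapping.lookup (Poly_Mapping.single M a) 0) *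
          Poly_Mapping.single \<gamma> b) \<alpha>"
        using inj_single_one[THEN injD, of \<gamma> \<alpha>] add_single_eq_single_iff[of M \<gamma> \<alpha>]
        by (auto simp: lookup_linear_part tilde_single mult_single lookup_single when_def)
    qed
  next
    case (add g h)
    then show ?case by (simp add: tilde.add linear_part.add distrib_left)
  qed
next
  case (add f g)
  then show ?case by (simp add: linear_part.add distrib_right lookup_add single_add)
qed

subsection \<open>Combinations with cofactors of bounded degree\<close>

definition bounded_combination ::
    "nat \<Rightarrow> (nat \<Rightarrow> 'a::comm_ring_1 mpoly) \<Rightarrow> nat \<Rightarrow> nat \<Rightarrow> 'a mpoly \<Rightarrow> bool" where
  "bounded_combination m fs r d f \<longleftrightarrow>
    (\<exists>gs. (\<forall>i<r. is_poly m (gs i)) \<and> f = (\<Sum>i<r. gs i * fs i) \<and> (\<forall>i<r. tdeg (gs i) \<le> d))"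

lemma bounded_combination_zero: "bounded_combination m fs r d 0"
  unfolding bounded_combination_def is_poly_def tdeg_le_iff
  by (intro exI[of _ "\<lambda>_. 0"]) simp

lemma bounded_combination_add:
  assumes "bounded_combination m fs r d f" "bounded_combination m fs r d g"
  shows "bounded_combination m fs r d (f + g)"
proof -
  from assms obtain gs hs where
    gs: "\<forall>i<r. is_poly m (gs i)" "f = (\<Sum>i<r. gs i * fs i)" "\<forall>i<r. tdeg (gs i) \<le> d" and
    hs: "\<forall>i<r. is_poly m (hs i)" "g = (\<Sum>i<r. hs i * fs i)" "\<forall>i<r. tdeg (hs i) \<le> d"
    unfolding bounded_combination_def by blast
  have "f + g = (\<Sum>i<r. (gs i + hs i) * fs i)"
    by (simp add: gs(2) hs(2) distrib_right sum.distrib)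
  with gs hs show ?thesis
    unfolding bounded_combination_def is_poly_def tdeg_le_iff
    by (intro exI[of _ "\<lambda>i. gs i + hs i"]) (auto dest: keys_add[THEN subsetD])
qed

lemma bounded_combination_monomial:
  assumes "i < r" "in_vars m \<alpha>" "ord_mon \<alpha> \<le> d"
  shows "bounded_combination m fs r d (Poly_Mapping.single \<alpha> c * fs i)"
proof -
  have "Poly_Mapping.single \<alpha> c * fs i =
      (\<Sum>j<r. (if j = i then Poly_Mapping.single \<alpha> c else 0) * fs j)"
  proof -
    have "(\<Sum>j<r. (if j = i then Poly_Mapping.single \<alpha> c else 0) * fs j) =
        (\<Sum>j<r. if j = i then Poly_Mapping.single \<alpha> c * fs j else 0)"
      by (rule sum.cong) auto
    with assms(1) show ?thesis by simp
  qed
  with assms show ?thesis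
    unfolding bounded_combination_def is_poly_def tdeg_le_iff
    by (intro exI[of _ "\<lambda>j. if j = i then Poly_Mapping.single \<alpha> c else 0"]) auto
qed

lemma tilde_in_ideal_ord_if_bounded_combination:
  assumes "bounded_combination m fs r d f"
  shows "tilde f \<in> ideal_ord m (tilde ` fs ` {..<r}) d"
proof -
  let ?S = "{tilde (Poly_Mapping.single \<alpha> 1 * h) | \<alpha> h. h \<in> fs ` {..<r} \<and> in_vars m \<alpha> \<and> ord_mon \<alpha> \<le> d}"
  interpret ideal: module "(*) :: 'a dpoly \<Rightarrow> 'a dpoly \<Rightarrow> 'a dpoly"
    by (rule module_times)
  from assms obtain gs where
    gs: "\<forall>i<r. is_poly m (gs i)" "f = (\<Sum>i<r. gs i * fs i)" "\<forall>i<r. tdeg (gs i) \<le> d"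
    unfolding bounded_combination_def by blast
  have "gs i * fs i = (\<Sum>\<beta>\<in>Poly_Mapping.keys (gs i).
      Poly_Mapping.single 0 (Poly_Mapping.lookup (gs i) \<beta>) * (Poly_Mapping.single \<beta> 1 * fs i))" for i
    by (subst poly_mapping_sum_single[of "gs i"])
      (simp add: sum_distrib_right mult_single mult.assoc[symmetric])
  then have "tilde f = (\<Sum>i<r. \<Sum>\<beta>\<in>Poly_Mapping.keys (gs i).
      Poly_Mapping.single 0 (Poly_Mapping.lookup (gs i) \<beta>) * tilde (Poly_Mapping.single \<beta> 1 * fs i))"
    by (simp add: gs(2) tilde.sum tilde_const_mult)
  also have "\<dots> \<in> ideal.span ?S"
  proof (intro ideal.span_sum ideal.span_scale ideal.span_base)
    fix i \<beta> assume "i \<in> {..<r}" "\<beta> \<in> Poly_Mapping.keys (gs i)"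
    with gs show "tilde (Poly_Mapping.single \<beta> 1 * fs i) \<in> ?S"
      unfolding is_poly_def tdeg_le_iff by blast
  qed
  finally show ?thesis
    by (simp add: ideal_ord_tilde_image ideal_gen_eq_span)
qed

lemma bounded_combination_if_tilde_in_ideal_ord:
  assumes "tilde f \<in> ideal_ord m (tilde ` fs ` {..<r}) d"
  shows "bounded_combination m fs r d f"
proof -
  let ?S = "{tilde (Poly_Mapping.single \<alpha> 1 * h) | \<alpha> h. h \<in> fs ` {..<r} \<and> in_vars m \<alpha> \<and> ord_mon \<alpha> \<le> d}"
  interpret ideal: module "(*) :: 'a dpoly \<Rightarrow> 'a dpoly \<Rightarrow> 'a dpoly"
    by (rule module_times)
  have "tilde f \<in> ideal.span ?S"
    using assms by (simp add: ideal_ord_tilde_image ideal_gen_eq_span)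
  \<comment> \<open>Quantifying over the multiplier \<open>c\<close> makes the invariant stable under the scalings in the span.\<close>
  then have "\<forall>c. bounded_combination m fs r d (linear_part (c * tilde f))"
  proof (induction rule: ideal.span_induct_alt)
    case base
    show ?case by (simp add: linear_part.zero bounded_combination_zero)
  next
    case (step a s y)
    then obtain \<alpha> i where s: "s = tilde (Poly_Mapping.single \<alpha> 1 * fs i)"
      and i: "i < r" "in_vars m \<alpha>" "ord_mon \<alpha> \<le> d"
      by blast
    have "linear_part (c * (a * s + y)) =
        Poly_Mapping.single \<alpha> (Poly_Mapping.lookup (c * a) 0) * fs i + linear_part (c * y)" for c
      by (simp add: s distrib_left linear_part.add mult.assoc[symmetric] linear_part_mult_tilde mult_single)
    with step.IH i show ?case
      by (simp add: bounded_combination_add bounded_combination_monomial)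
  qed
  then show ?thesis
    using linear_part_tilde[of f] by (metis mult_1)
qed

lemma tilde_in_ideal_ord_iff:
  "tilde f \<in> ideal_ord m (tilde ` fs ` {..<r}) d \<longleftrightarrow> bounded_combination m fs r d f"
  using tilde_in_ideal_ord_if_bounded_combination bounded_combination_if_tilde_in_ideal_ord by blast

theorem theorem4p3:
  fixes m r :: nat and f :: "'a::field mpoly" and fs :: "nat \<Rightarrow> 'a mpoly" and k :: nat
  assumes "is_poly m f"
    and "\<forall>i<r. is_poly m (fs i)"
    and "\<exists>gs. (\<forall>i<r. is_poly m (gs i)) \<and> f = (\<Sum>i<r. gs i * fs i)"
    and "k = (LEAST d. \<exists>gs. (\<forall>i<r. is_poly m (gs i)) \<and> f = (\<Sum>i<r. gs i * fs i)
                          \<and> (\<forall>i<r. tdeg (gs i) \<le> d))"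
  shows "tilde f \<in> ideal_ord m (tilde ` fs ` {..<r}) k
    \<and> (k \<ge> 1 \<longrightarrow> tilde f \<notin> ideal_ord m (tilde ` fs ` {..<r}) (k - 1))"
proof -
  have k: "k = (LEAST d. bounded_combination m fs r d f)"
    using assms(4) by (simp add: bounded_combination_def)
  from assms(3) obtain gs where "\<forall>i<r. is_poly m (gs i)" "f = (\<Sum>i<r. gs i * fs i)"
    by blast
  then have "bounded_combination m fs r (\<Sum>i<r. tdeg (gs i)) f"
    unfolding bounded_combination_def by (intro exI[of _ gs]) (auto intro: member_le_sum)
  then have "bounded_combination m fs r k f"
    unfolding k by (rule LeastI)
  moreover have "\<not> bounded_combination m fs r (k - 1) f" if "k \<ge> 1"
    using that not_less_Least[of "k - 1" "\<lambda>d. bounded_combination m fs r d f"] k by simp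
  ultimately show ?thesis
    by (simp add: tilde_in_ideal_ord_iff)
qed

end
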